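(* Let $0<p\le2$ and let $G$ be the additive group of finitely supported real sequences $r=(r_i)_{i\in\mathbb{N}}$. The function $r\mapsto\|r\|_p^p=\sum_i|r_i|^p$ from $G$ to $\mathbb{R}_+$ is a morphism on an arbitrary large subset of $G$: for every $N,M\in\mathbb{N}$ and every $s_1,\dots,s_M\in\mathbb{R}_+$ there exist $g_{n,k}\in G$ ($1\le n\le N$, $1\le k\le M$) such that $\|g_{m,k}-g_{n,j}\|_p^p=s_j+s_k$ for all $j,k$ and all $n\ne m$.
   Context: $\mathbb{R}_+=[0,\infty)$. The paper denotes this group by $\mathbb{R}^{\mathbb{N}}$ (countably many copies of $\mathbb{R}$, elements having finitely many nonzero coordinates), with group operation coordinatewise addition. *)

theory Defs
  imports Complex_Main
begin

definition fin_supp :: "(nat \<Rightarrow> real) \<Rightarrow> bool" where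
  "fin_supp r \<longleftrightarrow> finite {i. r i \<noteq> 0}"

definition lp_pow :: "real \<Rightarrow> (nat \<Rightarrow> real) \<Rightarrow> real" where
  "lp_pow p r = (\<Sum>i\<in>{i. r i \<noteq> 0}. \<bar>r i\<bar> powr p)"

end

theory Submission
  imports Defs "HOL-Library.Nat_Bijection"
begin

text \<open>Take \<open>g n k\<close> to be \<open>s k powr (1/p)\<close> times the unit sequence at the index
  \<open>prod_encode (n, k)\<close>. For \<open>n \<noteq> m\<close> the sequences \<open>g m k\<close> and \<open>g n j\<close> are supported at
  two distinct indices, so the \<open>p\<close>-th power sum of their difference is \<open>s k + s j\<close>.\<close>

definition scaled_unit :: "real \<Rightarrow> nat \<Rightarrow> nat \<Rightarrow> real" where
  "scaled_unit c a = (\<lambda>i. if i = a then c else 0)"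

lemma fin_supp_scaled_unit: "fin_supp (scaled_unit c a)"
  unfolding fin_supp_def scaled_unit_def
  by (rule finite_subset[of _ "{a}"]) auto

lemma lp_pow_eq_sum_superset:
  assumes "finite S" "{i. r i \<noteq> 0} \<subseteq> S"
  shows "lp_pow p r = (\<Sum>i\<in>S. \<bar>r i\<bar> powr p)"
  unfolding lp_pow_def
  by (rule sum.mono_neutral_left) (use assms in auto)

lemma lp_pow_scaled_unit_diff:
  assumes "a \<noteq> b"
  shows "lp_pow p (scaled_unit c a - scaled_unit d b) = \<bar>c\<bar> powr p + \<bar>d\<bar> powr p"
proof -
  have "lp_pow p (scaled_unit c a - scaled_unit d b)
          = (\<Sum>i\<in>{a, b}. \<bar>(scaled_unit c a - scaled_unit d b) i\<bar> powr p)"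
    by (rule lp_pow_eq_sum_superset) (auto simp: scaled_unit_def)
  also have "\<dots> = \<bar>c\<bar> powr p + \<bar>d\<bar> powr p"
    using assms by (simp add: scaled_unit_def)
  finally show ?thesis .
qed

theorem proposition4p11:
  fixes p :: real and N M :: nat and s :: "nat \<Rightarrow> real"
  assumes "0 < p" and "p \<le> 2"
    and "\<forall>k\<in>{1..M}. s k \<ge> 0"
  shows "\<exists>g :: nat \<Rightarrow> nat \<Rightarrow> (nat \<Rightarrow> real).
           (\<forall>n\<in>{1..N}. \<forall>k\<in>{1..M}. fin_supp (g n k)) \<and>
           (\<forall>n\<in>{1..N}. \<forall>m\<in>{1..N}. \<forall>j\<in>{1..M}. \<forall>k\<in>{1..M}.
              n \<noteq> m \<longrightarrow> lp_pow p (g m k - g n j) = s j + s k)"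
proof -
  define g where "g n k = scaled_unit (s k powr (1/p)) (prod_encode (n, k))" for n k
  have "lp_pow p (g m k - g n j) = s j + s k"
    if "n \<noteq> m" "j \<in> {1..M}" "k \<in> {1..M}" for n m j k
  proof -
    have "prod_encode (m, k) \<noteq> prod_encode (n, j)"
      using \<open>n \<noteq> m\<close> by (simp add: prod_encode_eq)
    moreover have "s j \<ge> 0" "s k \<ge> 0"
      using assms(3) that(2,3) by auto
    ultimately show ?thesis
      using \<open>0 < p\<close> by (simp add: g_def lp_pow_scaled_unit_diff powr_powr)
  qed
  then show ?thesis
    by (intro exI[of _ g]) (simp add: g_def fin_supp_scaled_unit)
qed

end
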